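(* Let $G$ be a finite group with $|G|\geq3$. Let $\mathcal{C}$ be a cycle of $\mathcal{P}(G)$ of maximum length. Then $\ell(\mathcal{C})\geq\max_{x\in G} o(x)$.
   Context: The power graph $\mathcal{P}(G)$ has vertex set $G$, and distinct $x,y$ are adjacent iff one is a positive integer power of the other. A cycle is a subgraph whose $k\ge3$ distinct vertices can be arranged cyclically with consecutive vertices adjacent; its length $\ell(\mathcal{C})$ is its number of edges ($=k$). $o(x)$ is the order of $x$. *)

theory Defs
  imports "HOL-Algebra.Multiplicative_Group"
begin

definition power_adj :: "('a, 'b) monoid_scheme \<Rightarrow> 'a \<Rightarrow> 'a \<Rightarrow> bool" where
  "power_adj G x y \<longleftrightarrow> x \<in> carrier G \<and> y \<in> carrier G \<and> x \<noteq> y \<and>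
     ((\<exists>n::nat. n > 0 \<and> y = x [^]\<^bsub>G\<^esub> n) \<or> (\<exists>n::nat. n > 0 \<and> x = y [^]\<^bsub>G\<^esub> n))"

text \<open>A cycle of the power graph, given as the cyclic list of its k >= 3 distinct vertices;
  its length (number of edges) is the length of the list.\<close>
definition power_graph_cycle :: "('a, 'b) monoid_scheme \<Rightarrow> 'a list \<Rightarrow> bool" where
  "power_graph_cycle G cs \<longleftrightarrow> length cs \<ge> 3 \<and> distinct cs \<and> set cs \<subseteq> carrier G \<and>
     (\<forall>i < length cs. power_adj G (cs ! i) (cs ! ((i + 1) mod length cs)))"

end

theory Submission
  imports Defs "HOL-Number_Theory.Cong"
begin

text \<open>If x has maximal order n, its powers x^0, ..., x^(n-1) carry a Hamiltonian cycle of the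
  power graph of the cyclic group generated by x. There, x^b is a power of x^a as soon as
  gcd(a, n) divides gcd(b, n), and x^0 is adjacent to everything; so it suffices to order the
  residues mod n, starting at 0, such that the gcds with n of consecutive residues are comparable
  under divisibility. Such an ordering is built by induction on n: write n = p^k m with p not
  dividing m and replace each residue c in an ordering mod m by its fibre {c + j m | j < p^k}.
  Within a fibre the gcds with n are gcd(c, m) times powers of p, hence comparable, and one passes
  from the fibre of c to that of the next residue c' through an element divisible by p^k if
  gcd(c, m) divides gcd(c', m), and through an element coprime to p^k otherwise.\<close>

lemma successively_if_pairwise:
  "(\<And>x y. x \<in> set xs \<Longrightarrow> y \<in> set xs \<Longrightarrow> R x y) \<Longrightarrow> successively R xs"
  by (simp add: successively_conv_nth)

lemma successively_cyclic_nth: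
  assumes "successively R xs" "R (last xs) (hd xs)" "i < length xs"
  shows "R (xs ! i) (xs ! ((i + 1) mod length xs))"
proof (cases "Suc i < length xs")
  case True
  then show ?thesis
    using assms(1) by (simp add: successively_nth)
next
  case False
  with assms(3) have "Suc i = length xs"
    by simp
  then have "i = length xs - 1" "(i + 1) mod length xs = 0"
    by simp_all
  moreover have "xs \<noteq> []"
    using assms(3) by auto
  ultimately show ?thesis
    using assms(2) by (simp add: last_conv_nth hd_conv_nth)
qed

lemma distinct_nth_cyclic_succ_neq:
  assumes "distinct xs" "2 \<le> length xs" "i < length xs"
  shows "xs ! i \<noteq> xs ! ((i + 1) mod length xs)"
proof -
  have "i \<noteq> (i + 1) mod length xs"
  proof (cases "Suc i < length xs")
    case False
    with assms(3) have "Suc i = length xs"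
      by simp
    with assms(2) show ?thesis
      by auto
  qed simp
  moreover have "(i + 1) mod length xs < length xs"
    using assms(3) by (intro mod_less_divisor) auto
  ultimately show ?thesis
    using assms(1,3) by (simp add: nth_eq_iff_index_eq)
qed

lemma gcd_mult_coprime:
  fixes a b c :: nat
  assumes "coprime b c"
  shows "gcd a (b * c) = gcd a b * gcd a c"
proof (rule dvd_antisym)
  have "gcd a (b * c) dvd gcd (a * c) (b * c)"
    by simp
  also have "\<dots> = gcd a b * c"
    by (simp add: gcd_mult_right gcd.commute)
  finally have "gcd a (b * c) dvd gcd (gcd a b * a) (gcd a b * c)"
    by simp
  then show "gcd a (b * c) dvd gcd a b * gcd a c"
    by (simp add: gcd_mult_left)
  have "coprime (gcd a b) (gcd a c)"
    using assms by (rule coprime_divisors[OF gcd_dvd2 gcd_dvd2])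
  then show "gcd a b * gcd a c dvd gcd a (b * c)"
    by (simp add: divides_mult mult_dvd_mono)
qed

lemma dvd_prime_power_comparable:
  fixes p :: nat
  assumes "prime p" "u dvd p ^ k" "v dvd p ^ k"
  shows "u dvd v \<or> v dvd u"
proof -
  obtain i j where "u = p ^ i" "v = p ^ j"
    using assms divides_primepow_nat by metis
  then show ?thesis
    by (cases "i \<le> j") (auto simp: le_imp_power_dvd)
qed

definition gcd_comparable :: "nat \<Rightarrow> nat \<Rightarrow> nat \<Rightarrow> bool" where
  "gcd_comparable n a b \<longleftrightarrow> gcd a n dvd gcd b n \<or> gcd b n dvd gcd a n"

lemma gcd_comparable_0_right [simp]: "gcd_comparable n a 0"
  by (simp add: gcd_comparable_def)

definition comparable_residue_path :: "nat \<Rightarrow> nat list \<Rightarrow> bool" where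
  "comparable_residue_path n L \<longleftrightarrow>
     distinct L \<and> set L = {..<n} \<and> hd L = 0 \<and> successively (gcd_comparable n) L"

definition fiber :: "nat \<Rightarrow> nat \<Rightarrow> nat \<Rightarrow> nat set" where
  "fiber P m c = (\<lambda>j. c + j * m) ` {..<P}"

lemma fiber_mod: "x \<in> fiber P m c \<Longrightarrow> x mod m = c mod m"
  by (auto simp: fiber_def)

lemma gcd_fiber: "x \<in> fiber P m c \<Longrightarrow> gcd x m = gcd c m"
  unfolding fiber_def by (metis (no_types, lifting) gcd_add_mult gcd.commute add.commute imageE)

lemma UN_fiber: "(\<Union>c<m. fiber P m c) = {..<P * m}"
proof (intro equalityI subsetI)
  fix x assume "x \<in> (\<Union>c<m. fiber P m c)"
  then obtain c j where "c < m" "j < P" "x = c + j * m"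
    by (auto simp: fiber_def)
  moreover have "(j + 1) * m \<le> P * m"
    using \<open>j < P\<close> by (intro mult_le_mono1) simp
  ultimately show "x \<in> {..<P * m}"
    by simp
next
  fix x assume "x \<in> {..<P * m}"
  then have "0 < m"
    by (cases m) auto
  with \<open>x \<in> {..<P * m}\<close> have "x div m < P" "x mod m < m"
    by (simp_all add: less_mult_imp_div_less)
  moreover have "x = x mod m + x div m * m"
    by simp
  ultimately show "x \<in> (\<Union>c<m. fiber P m c)"
    unfolding fiber_def by blast
qed

lemma fiber_residue_exists:
  fixes P m c r :: nat
  assumes "coprime P m" "r < P"
  shows "\<exists>x\<in>fiber P m c. x mod P = r"
proof -
  from assms(1) have "coprime m P"
    by (simp add: coprime_commute)
  then obtain w where w: "[m * w = 1] (mod P)"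
    using cong_solve_coprime_nat by auto
  define j where "j = w * (r + (P - 1) * c) mod P"
  have "[j = w * (r + (P - 1) * c)] (mod P)"
    unfolding j_def by (simp add: cong_def)
  then have "[c + j * m = c + w * (r + (P - 1) * c) * m] (mod P)"
    by (intro cong_add cong_mult cong_refl)
  also have "c + w * (r + (P - 1) * c) * m = c + (m * w) * (r + (P - 1) * c)"
    by (simp add: mult_ac)
  also have "[\<dots> = c + 1 * (r + (P - 1) * c)] (mod P)"
    by (intro cong_add cong_mult cong_refl w)
  also have "c + 1 * (r + (P - 1) * c) = r + P * c"
    using assms(2) by (cases P) auto
  also have "[r + P * c = r] (mod P)"
    by (simp add: cong_def)
  finally have "(c + j * m) mod P = r"
    using assms(2) by (simp add: cong_def)
  moreover have "j < P"
    using assms(2) unfolding j_def by simp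
  ultimately show ?thesis
    unfolding fiber_def by blast
qed

definition fiber_entry :: "nat \<Rightarrow> nat \<Rightarrow> nat \<Rightarrow> nat \<Rightarrow> nat" where
  "fiber_entry P m c c' =
     (SOME x. x \<in> fiber P m c' \<and> x mod P = (if gcd c m dvd gcd c' m then 0 else 1))"

definition fiber_list :: "nat \<Rightarrow> nat \<Rightarrow> nat \<Rightarrow> nat \<Rightarrow> nat list" where
  "fiber_list P m e c = e # removeAll e (map (\<lambda>j. c + j * m) [0..<P])"

fun lift_path :: "nat \<Rightarrow> nat \<Rightarrow> nat \<Rightarrow> nat list \<Rightarrow> nat list" where
  "lift_path P m prev [] = []"
| "lift_path P m prev (c # cs) = fiber_list P m (fiber_entry P m prev c) c @ lift_path P m c cs"

lemma set_fiber_list: "e \<in> fiber P m c \<Longrightarrow> set (fiber_list P m e c) = fiber P m c"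
  by (auto simp: fiber_list_def fiber_def)

lemma distinct_fiber_list: "0 < m \<Longrightarrow> distinct (fiber_list P m e c)"
  by (auto simp: fiber_list_def distinct_map inj_on_def distinct_removeAll)

locale prime_power_coprime_factor =
  fixes p k m :: nat
  assumes prime: "prime p" and k_pos: "0 < k" and coprime: "coprime p m" and m_pos: "0 < m"
begin

abbreviation P :: nat where "P \<equiv> p ^ k"

lemma one_less_P: "1 < P"
  using prime_gt_1_nat[OF prime] k_pos by (rule one_less_power)

lemma coprime_P: "coprime P m"
  using coprime by simp

lemma fiber_entry:
  "fiber_entry P m c c' \<in> fiber P m c'"
  "fiber_entry P m c c' mod P = (if gcd c m dvd gcd c' m then 0 else 1)"
proof -
  have "(if gcd c m dvd gcd c' m then 0 else 1) < P"
    using one_less_P by (simp add: prime_gt_0_nat[OF prime])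
  from fiber_residue_exists[OF coprime_P this]
  have "\<exists>x. x \<in> fiber P m c' \<and> x mod P = (if gcd c m dvd gcd c' m then 0 else 1)"
    by blast
  from someI_ex[OF this] show
    "fiber_entry P m c c' \<in> fiber P m c'"
    "fiber_entry P m c c' mod P = (if gcd c m dvd gcd c' m then 0 else 1)"
    unfolding fiber_entry_def by blast+
qed

lemma gcd_fiber_mult: "x \<in> fiber P m c \<Longrightarrow> gcd x (P * m) = gcd x P * gcd c m"
  using gcd_mult_coprime[OF coprime_P] gcd_fiber by metis

lemma gcd_comparable_fiber:
  assumes "x \<in> fiber P m c" "y \<in> fiber P m c"
  shows "gcd_comparable (P * m) x y"
proof -
  have "gcd x P dvd gcd y P \<or> gcd y P dvd gcd x P"
    using dvd_prime_power_comparable[OF prime, of "gcd x P" k "gcd y P"] by simp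
  then show ?thesis
    unfolding gcd_comparable_def gcd_fiber_mult[OF assms(1)] gcd_fiber_mult[OF assms(2)]
    by (auto intro: mult_dvd_mono)
qed

lemma gcd_comparable_fiber_entry:
  assumes x: "x \<in> fiber P m c" and cc': "gcd_comparable m c c'"
  shows "gcd_comparable (P * m) x (fiber_entry P m c c')"
proof (cases "gcd c m dvd gcd c' m")
  case True
  then have "P dvd fiber_entry P m c c'"
    using fiber_entry(2) by (simp add: dvd_eq_mod_eq_0)
  then have "gcd (fiber_entry P m c c') (P * m) = P * gcd c' m"
    using gcd_fiber_mult[OF fiber_entry(1)] by (simp add: gcd_nat.absorb2)
  moreover have "gcd x P * gcd c m dvd P * gcd c' m"
    using True by (simp add: mult_dvd_mono)
  ultimately show ?thesis
    unfolding gcd_comparable_def gcd_fiber_mult[OF x] by simp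
next
  case False
  then have "gcd (fiber_entry P m c c') P = 1"
    using fiber_entry(2) by (metis gcd.commute gcd_red_nat gcd_1_nat)
  then have "gcd (fiber_entry P m c c') (P * m) = gcd c' m"
    using gcd_fiber_mult[OF fiber_entry(1)] by simp
  moreover have "gcd c' m dvd gcd x P * gcd c m"
    using False cc' unfolding gcd_comparable_def by simp
  ultimately show ?thesis
    unfolding gcd_comparable_def gcd_fiber_mult[OF x] by simp
qed

lemma set_lift_path: "set (lift_path P m prev cs) = (\<Union>c\<in>set cs. fiber P m c)"
  by (induction cs arbitrary: prev) (simp_all add: set_fiber_list fiber_entry)

lemma distinct_lift_path:
  "distinct cs \<Longrightarrow> set cs \<subseteq> {..<m} \<Longrightarrow> distinct (lift_path P m prev cs)"
proof (induction cs arbitrary: prev)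
  case (Cons c cs)
  have "fiber P m c \<inter> fiber P m c' = {}" if "c' \<in> set cs" for c'
    using Cons.prems that fiber_mod[of _ P m c] fiber_mod[of _ P m c'] by (force simp: disjoint_iff)
  then show ?case
    using Cons distinct_fiber_list[OF m_pos]
    by (auto simp: set_fiber_list fiber_entry set_lift_path)
qed simp

lemma successively_lift_path:
  "successively (gcd_comparable m) cs \<Longrightarrow>
   successively (gcd_comparable (P * m)) (lift_path P m prev cs)"
proof (induction cs arbitrary: prev)
  case (Cons c cs)
  let ?F = "fiber_list P m (fiber_entry P m prev c) c"
  have set_F: "set ?F = fiber P m c"
    by (simp add: set_fiber_list fiber_entry)
  have F: "?F \<noteq> []" "successively (gcd_comparable (P * m)) ?F"
    by (simp add: fiber_list_def) (rule successively_if_pairwise, simp add: set_F gcd_comparable_fiber)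
  have "successively (gcd_comparable m) cs"
    using Cons.prems by (cases cs) simp_all
  then have rest: "successively (gcd_comparable (P * m)) (lift_path P m c cs)"
    by (rule Cons.IH)
  show ?case
  proof (cases cs)
    case Nil
    then show ?thesis
      using F by simp
  next
    case (Cons c' cs')
    have "last ?F \<in> fiber P m c"
      using F(1) set_F last_in_set by blast
    moreover have "gcd_comparable m c c'"
      using Cons.prems \<open>cs = c' # cs'\<close> by simp
    ultimately have "gcd_comparable (P * m) (last ?F) (hd (lift_path P m c cs))"
      using \<open>cs = c' # cs'\<close> gcd_comparable_fiber_entry by (simp add: fiber_list_def)
    then show ?thesis
      using F rest by (simp add: successively_append_iff)
  qed
qed simp

lemma hd_lift_path_0: "hd (lift_path P m prev (0 # cs)) = 0"
proof -
  have "gcd prev m dvd gcd 0 m"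
    by simp
  then have "fiber_entry P m prev 0 \<in> fiber P m 0" "P dvd fiber_entry P m prev 0"
    using fiber_entry[of prev 0] by (simp_all add: dvd_eq_mod_eq_0)
  then obtain j where j: "j < P" "fiber_entry P m prev 0 = j * m" "P dvd j * m"
    by (auto simp: fiber_def)
  then have "P dvd j"
    using coprime_P by (simp add: coprime_dvd_mult_left_iff)
  with j(1) have "j = 0"
    by (metis gr_zeroI nat_dvd_not_less)
  with j(2) have "fiber_entry P m prev 0 = 0"
    by simp
  then show ?thesis
    by (simp add: fiber_list_def)
qed

lemma comparable_residue_path_lift:
  assumes "comparable_residue_path m L"
  shows "comparable_residue_path (P * m) (lift_path P m 0 L)"
proof -
  have L: "distinct L" "set L = {..<m}" "hd L = 0" "successively (gcd_comparable m) L"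
    using assms by (simp_all add: comparable_residue_path_def)
  then have "L = 0 # tl L"
    using m_pos by (metis list.collapse empty_iff lessThan_iff set_empty2)
  then have "hd (lift_path P m 0 L) = 0"
    by (metis hd_lift_path_0)
  with L show ?thesis
    by (simp add: comparable_residue_path_def distinct_lift_path set_lift_path UN_fiber
        successively_lift_path)
qed

end

lemma comparable_residue_path_exists: "0 < n \<Longrightarrow> \<exists>L. comparable_residue_path n L"
proof (induction n rule: less_induct)
  case (less n)
  show ?case
  proof (cases "n = 1")
    case True
    then have "comparable_residue_path n [0]"
      by (auto simp: comparable_residue_path_def)
    then show ?thesis ..
  next
    case False
    then obtain p where p: "prime p" "p dvd n"
      using prime_factor_nat by blast
    define k where "k = multiplicity p n"
    have "n \<noteq> 0" "\<not> is_unit p"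
      using less.prems p(1) by (auto dest: not_prime_unit)
    then obtain m where n_eq: "n = p ^ k * m" and "\<not> p dvd m"
      unfolding k_def by (rule multiplicity_decompose')
    interpret prime_power_coprime_factor p k m
    proof
      show "prime p" by fact
      show "0 < k"
        using p less.prems by (simp add: k_def prime_multiplicity_gt_zero_iff)
      show "coprime p m"
        using p(1) \<open>\<not> p dvd m\<close> by (simp add: prime_imp_coprime)
      show "0 < m"
        using less.prems n_eq by (cases m) auto
    qed
    have "m < n"
      using one_less_P m_pos n_eq by simp
    then obtain L where "comparable_residue_path m L"
      using less.IH m_pos by blast
    then show ?thesis
      using comparable_residue_path_lift n_eq by metis
  qed
qed

context group
begin

lemma pow_eq_pow_pow_if_gcd_dvd:
  assumes x: "x \<in> carrier G" and ord_pos: "0 < ord x" and dvd: "gcd a (ord x) dvd b"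
  shows "\<exists>j::nat. 0 < j \<and> x [^] b = (x [^] a) [^] j"
proof (cases "a = 0")
  case True
  then have "x [^] b = \<one>"
    using x dvd by (simp add: pow_eq_id)
  then show ?thesis
    using True by (intro exI[of _ "1::nat"]) simp
next
  case False
  obtain t where t: "b = gcd a (ord x) * t"
    using dvd by blast
  obtain u v where uv: "a * u = ord x * v + gcd a (ord x)"
    using bezout_nat[OF False] by blast
  have "a * (u * t + ord x) = (a * u) * t + ord x * a"
    by (simp add: algebra_simps)
  also have "\<dots> = ord x * (v * t + a) + b"
    unfolding uv t by (simp add: algebra_simps)
  finally have "(x [^] a) [^] (u * t + ord x) = x [^] (ord x * (v * t + a)) \<otimes> x [^] b"
    using x by (simp add: nat_pow_pow nat_pow_mult)
  also have "x [^] (ord x * (v * t + a)) = \<one>"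
    using x by (simp add: pow_eq_id)
  finally have "(x [^] a) [^] (u * t + ord x) = x [^] b"
    using x by simp
  then show ?thesis
    using ord_pos by (intro exI[of _ "u * t + ord x"]) auto
qed

lemma power_adj_pow_pow:
  assumes x: "x \<in> carrier G" and ord_pos: "0 < ord x"
    and comparable: "gcd_comparable (ord x) a b" and neq: "x [^] a \<noteq> x [^] b"
  shows "power_adj G (x [^] a) (x [^] b)"
proof -
  have "gcd a (ord x) dvd b \<or> gcd b (ord x) dvd a"
    using comparable unfolding gcd_comparable_def by (meson dvd_trans gcd_dvd1)
  then show ?thesis
    using pow_eq_pow_pow_if_gcd_dvd[OF x ord_pos] neq x unfolding power_adj_def by auto
qed

lemma power_graph_cycle_of_ord:
  assumes x: "x \<in> carrier G" and ord: "3 \<le> ord x"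
  shows "\<exists>ds. power_graph_cycle G ds \<and> length ds = ord x"
proof -
  obtain L where "comparable_residue_path (ord x) L"
    using comparable_residue_path_exists ord by fastforce
  then have L: "distinct L" "set L = {..<ord x}" "hd L = 0" "successively (gcd_comparable (ord x)) L"
    by (simp_all add: comparable_residue_path_def)
  have len: "length L = ord x"
    using distinct_card[OF L(1)] L(2) by simp
  have "inj_on (\<lambda>k. x [^] k) (set L)"
    using ord_inj[OF x] L(2) ord by (simp add: atLeast0AtMost lessThan_Suc_atMost[symmetric])
  define ds where "ds = map (\<lambda>k. x [^] k) L"
  have "power_graph_cycle G ds"
    unfolding power_graph_cycle_def
  proof (intro conjI allI impI)
    show "3 \<le> length ds"
      using len ord by (simp add: ds_def)
    show dist: "distinct ds"
      using L(1) \<open>inj_on (\<lambda>k. x [^] k) (set L)\<close> by (simp add: ds_def distinct_map)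
    show "set ds \<subseteq> carrier G"
      using x by (auto simp: ds_def)
    fix i assume i: "i < length ds"
    let ?j = "(i + 1) mod length ds"
    have "gcd_comparable (ord x) (L ! i) (L ! ?j)"
      using successively_cyclic_nth[OF L(4)] L(3) i by (simp add: ds_def)
    moreover have "ds ! i \<noteq> ds ! ?j"
      using distinct_nth_cyclic_succ_neq[OF dist _ i] len ord by (simp add: ds_def)
    moreover have "?j < length ds"
      using i by (intro mod_less_divisor) auto
    ultimately show "power_adj G (ds ! i) (ds ! ?j)"
      using power_adj_pow_pow[OF x] ord i by (simp add: ds_def)
  qed
  then show ?thesis
    using len by (auto simp: ds_def)
qed

end

theorem mainTheorem4:
  fixes G :: "('a, 'b) monoid_scheme" and cs :: "'a list"
  assumes "group G" and "finite (carrier G)" and "card (carrier G) \<ge> 3"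
    and "power_graph_cycle G cs"
    and "\<forall>ds. power_graph_cycle G ds \<longrightarrow> length ds \<le> length cs"
  shows "length cs \<ge> Max (group.ord G ` carrier G)"
proof -
  interpret group G by fact
  have "Max (ord ` carrier G) \<in> ord ` carrier G"
    using assms(2) one_closed by (intro Max_in) auto
  then obtain x where x: "x \<in> carrier G" "ord x = Max (ord ` carrier G)"
    by auto
  show ?thesis
  proof (cases "ord x \<le> 2")
    case True
    then show ?thesis
      using assms(4) x(2) by (simp add: power_graph_cycle_def)
  next
    case False
    then obtain ds where "power_graph_cycle G ds" "length ds = ord x"
      using power_graph_cycle_of_ord[OF x(1)] by fastforce
    then show ?thesis
      using assms(5) x(2) by metis
  qed
qed

end
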